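(* Let $G=(S,A_1\times A_2,P,s_0,\gamma,F_1,F_2)$ be a two-player concurrent stochastic reachability game, and let $A_1^2\subseteq A_1$. Let $G^2=(S,A_1^2\times A_2,P^2,s_0,\gamma,F_1,F_2)$ be the game obtained from $G$ by eliminating all transitions enabled by pairs of a P1 action in $A_1\setminus A_1^2$ and a P2 action, i.e. $P^2(s,(a,b))=P(s,(a,b))$ if $a\in A_1^2$ and $P^2(s,(a,b))$ is undefined otherwise. Let $\mathsf{ASW}_2$ and $\mathsf{ASW}_2^2$ denote P2's almost-sure winning regions in $G$ and in $G^2$, respectively. Then $\mathsf{ASW}_2\subseteq \mathsf{ASW}_2^2$.
   Context: A two-player concurrent stochastic game on a graph with reachability objectives is a tuple $G=(S,A,P,s_0,\gamma,F_1,F_2)$ where $S$ is a finite set of states, $A=A_1\times A_2$ with $A_1$ (resp. $A_2$) the finite action set of player 1, P1 (resp. player 2, P2), $P:S\times A\to\Delta(S)$ is a probabilistic transition function (at each state both players choose actions simultaneously and the next state is drawn from $P(\cdot\mid s,(a,b))$), $s_0\in S$ is an initial state, $\gamma\in(0,1]$ a discount factor, and $F_1\subseteq S$, $F_2\subseteq S\setminus F_1$ are the target sets of P1 and P2; all states in $F_1\cup F_2$ are absorbing. A play is a sequence $s_0(a_0,b_0)s_1(a_1,b_1)\dots$ with $P(s_{i+1}\mid s_i,(a_i,b_i))>0$; a (mixed) strategy of player $i$ maps finite play prefixes to distributions over $A_i$. A play satisfies the reachability objective for $F$ if some state of it lies in $F$. The almost-sure winning region of player $i$ is the set of states $s$ from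 which player $i$ has a strategy such that, for every strategy of the opponent, the induced play starting from $s$ reaches $F_i$ with probability one. *)

theory Defs
  imports "HOL-Probability.Probability"
begin

type_synonym ('s,'a,'b) hist = "('s \<times> 'a \<times> 'b) list"
type_synonym ('s,'a,'b,'c) strat = "('s,'a,'b) hist \<Rightarrow> 's \<Rightarrow> 'c pmf"

definition valid_strat :: "'c set \<Rightarrow> ('s,'a,'b,'c) strat \<Rightarrow> bool" where
  "valid_strat A \<sigma> \<longleftrightarrow> (\<forall>h s. set_pmf (\<sigma> h s) \<subseteq> A)"

text \<open>Well-formed game (discount factor and initial state play no role for
  almost-sure winning regions of reachability objectives).\<close>
definition csg :: "'s set \<Rightarrow> 'a set \<Rightarrow> 'b set \<Rightarrow> ('s \<Rightarrow> 'a \<Rightarrow> 'b \<Rightarrow> 's pmf)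
    \<Rightarrow> 's set \<Rightarrow> 's set \<Rightarrow> bool" where
  "csg S A1 A2 P F1 F2 \<longleftrightarrow>
     finite S \<and> finite A1 \<and> finite A2 \<and>
     F1 \<subseteq> S \<and> F2 \<subseteq> S - F1 \<and>
     (\<forall>s\<in>S. \<forall>a\<in>A1. \<forall>b\<in>A2. set_pmf (P s a b) \<subseteq> S) \<and>
     (\<forall>s\<in>F1 \<union> F2. \<forall>a\<in>A1. \<forall>b\<in>A2. P s a b = return_pmf s)"

text \<open>Distribution of the event ``F is visited within the first n steps''
  (i.e. among states s_0..s_n) for the play induced by \<sigma>, \<tau> from history h
  and current state s.\<close>
fun reach_within :: "('s \<Rightarrow> 'a \<Rightarrow> 'b \<Rightarrow> 's pmf) \<Rightarrow> 's set
    \<Rightarrow> ('s,'a,'b,'a) strat \<Rightarrow> ('s,'a,'b,'b) strat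
    \<Rightarrow> nat \<Rightarrow> ('s,'a,'b) hist \<Rightarrow> 's \<Rightarrow> bool pmf" where
  "reach_within P F \<sigma> \<tau> 0 h s = return_pmf (s \<in> F)"
| "reach_within P F \<sigma> \<tau> (Suc n) h s =
     (if s \<in> F then return_pmf True else
        bind_pmf (\<sigma> h s) (\<lambda>a. bind_pmf (\<tau> h s) (\<lambda>b. bind_pmf (P s a b)
          (\<lambda>t. reach_within P F \<sigma> \<tau> n (h @ [(s, a, b)]) t))))"

text \<open>Probability that the play from s reaches F (limit of the
  monotone bounded-horizon reachability probabilities).\<close>
definition reach_prob :: "('s \<Rightarrow> 'a \<Rightarrow> 'b \<Rightarrow> 's pmf) \<Rightarrow> 's set
    \<Rightarrow> ('s,'a,'b,'a) strat \<Rightarrow> ('s,'a,'b,'b) strat \<Rightarrow> 's \<Rightarrow> real" where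
  "reach_prob P F \<sigma> \<tau> s = (SUP n. pmf (reach_within P F \<sigma> \<tau> n [] s) True)"

definition ASW2 :: "'s set \<Rightarrow> 'a set \<Rightarrow> 'b set \<Rightarrow> ('s \<Rightarrow> 'a \<Rightarrow> 'b \<Rightarrow> 's pmf)
    \<Rightarrow> 's set \<Rightarrow> 's set" where
  "ASW2 S A1 A2 P F2 = {s \<in> S. \<exists>\<tau>. valid_strat A2 \<tau> \<and>
      (\<forall>\<sigma>. valid_strat A1 \<sigma> \<longrightarrow> reach_prob P F2 \<sigma> \<tau> s = 1)}"

definition restrict_P1 :: "'a set \<Rightarrow> ('s \<Rightarrow> 'a \<Rightarrow> 'b \<Rightarrow> 's pmf) \<Rightarrow> ('s \<Rightarrow> 'a \<Rightarrow> 'b \<Rightarrow> 's pmf)" where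
  "restrict_P1 A P = (\<lambda>s a b. if a \<in> A then P s a b else undefined)"

end

theory Submission
  imports Defs
begin

text \<open>A strategy of player 1 that only uses actions in \<open>A\<^sub>1\<^sup>2\<close> never
  triggers a removed transition, so against it the restricted game and the
  original game induce the same plays. Hence a player 2 strategy that wins
  almost surely against all of player 1's strategies in the original game
  still wins against the smaller set of strategies in the restricted game.\<close>

lemma valid_strat_mono:
  assumes "valid_strat A \<sigma>" and "A \<subseteq> B"
  shows "valid_strat B \<sigma>"
  using assms unfolding valid_strat_def by blast

lemma reach_within_restrict_P1:
  assumes "valid_strat A \<sigma>"
  shows "reach_within (restrict_P1 A P) F \<sigma> \<tau> n h s = reach_within P F \<sigma> \<tau> n h s"
proof (induction n arbitrary: h s)
  case 0
  then show ?case by simp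
next
  case (Suc n)
  have "restrict_P1 A P s a b = P s a b" if "a \<in> set_pmf (\<sigma> h s)" for a b
    using assms that unfolding valid_strat_def restrict_P1_def by auto
  then show ?case
    by (auto simp: Suc.IH intro!: bind_pmf_cong)
qed

lemma reach_prob_restrict_P1:
  assumes "valid_strat A \<sigma>"
  shows "reach_prob (restrict_P1 A P) F \<sigma> \<tau> s = reach_prob P F \<sigma> \<tau> s"
  unfolding reach_prob_def using reach_within_restrict_P1[OF assms] by simp

theorem lemma2:
  fixes S :: "'s set" and A1 A12 :: "'a set" and A2 :: "'b set"
    and P :: "'s \<Rightarrow> 'a \<Rightarrow> 'b \<Rightarrow> 's pmf" and F1 F2 :: "'s set"
  assumes "csg S A1 A2 P F1 F2"
    and "A12 \<subseteq> A1"
  shows "ASW2 S A1 A2 P F2 \<subseteq> ASW2 S A12 A2 (restrict_P1 A12 P) F2"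
proof
  fix s assume "s \<in> ASW2 S A1 A2 P F2"
  then obtain \<tau> where "s \<in> S" and "valid_strat A2 \<tau>"
    and wins: "\<And>\<sigma>. valid_strat A1 \<sigma> \<Longrightarrow> reach_prob P F2 \<sigma> \<tau> s = 1"
    unfolding ASW2_def by blast
  moreover have "reach_prob (restrict_P1 A12 P) F2 \<sigma> \<tau> s = 1"
    if "valid_strat A12 \<sigma>" for \<sigma>
    using that wins[OF valid_strat_mono[OF that assms(2)]]
    by (simp add: reach_prob_restrict_P1)
  ultimately show "s \<in> ASW2 S A12 A2 (restrict_P1 A12 P) F2"
    unfolding ASW2_def by blast
qed

end
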